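(* Let $\varepsilon_\lambda=\frac{\log^2\lambda}{\lambda}$. As $\lambda\to\infty$, $$\mathbb{P}(J^\lambda_{2\varepsilon_\lambda}=J^\lambda)\to1\quad\text{and}\quad\mathbb{P}(I^\lambda_{2\varepsilon_\lambda}=I^\lambda)\to1.$$ Moreover, with probability tending to $1$, $J^\lambda\subset\mathbb{B}_{2\varepsilon_\lambda}$ and $I^\lambda\subset\mathbb{B}_{2\varepsilon_\lambda}$.
   Context: $\mathbb{B}$ closed unit ball in $\mathbb{R}^d$ ($d\ge2$), $\mathbb{B}_r=\{x:\|x\|<r\}$. Shells: $\mathrm{Sh}^-(\varepsilon)=\{x:\|x\|\in(1-\varepsilon,1)\}$, $\mathrm{Sh}^+(\varepsilon)=\{x:\|x\|\in(1,1+\varepsilon)\}$, $\mathrm{Sh}(\varepsilon)=\mathrm{Sh}^-(\varepsilon)\cup\partial\mathbb{B}\cup\mathrm{Sh}^+(\varepsilon)$. Tessellation model: $\mathcal X_\lambda$ is a Poisson point process on $\mathbb{R}^d$ of intensity $\lambda/2$ (times Lebesgue); $J^\lambda$ is the (closure of the) connected component of the origin in $\mathbb{R}^d\setminus\bigcup_{x\in\mathcal X_\lambda}(x+\partial\mathbb{B})$, and $J^\lambda_\varepsilon$ is the same with $\mathcal X_\lambda$ replaced by $\mathcal X_\lambda\cap\mathrm{Sh}(\varepsilon)$. Intersection model: $\mathcal{C}_\lambda$ is a Poisson point process on $\mathbb{B}$ of intensity $\lambda$, $I^\lambda=\bigcap_{c\in\mathcal C_\lambda}(c+\mathbb{B})$,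 and $I^\lambda_\varepsilon=\bigcap_{c\in\mathcal C_\lambda\cap\mathrm{Sh}^-(\varepsilon)}(c+\mathbb{B})$. *)

theory Defs
  imports "HOL-Probability.Probability"
begin

definition poisson_pp :: "'b measure \<Rightarrow> ('b \<Rightarrow> 'a::euclidean_space set) \<Rightarrow> 'a set \<Rightarrow> real \<Rightarrow> bool" where
  "poisson_pp M X W c \<longleftrightarrow>
     prob_space M \<and>
     (\<forall>\<omega>\<in>space M. X \<omega> \<subseteq> W \<and> (\<forall>K. bounded K \<longrightarrow> finite (X \<omega> \<inter> K))) \<and>
     (\<forall>A. A \<in> sets borel \<and> bounded A \<and> A \<subseteq> W \<longrightarrow>
        (\<lambda>\<omega>. card (X \<omega> \<inter> A)) \<in> measurable M (count_space UNIV) \<and>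
        (\<forall>k::nat. measure M {\<omega>\<in>space M. card (X \<omega> \<inter> A) = k} =
            exp (- (c * measure lborel A)) * (c * measure lborel A) ^ k / fact k)) \<and>
     (\<forall>I (A :: nat \<Rightarrow> 'a set). finite I \<and> disjoint_family_on A I \<and>
        (\<forall>i\<in>I. A i \<in> sets borel \<and> bounded (A i) \<and> A i \<subseteq> W) \<longrightarrow>
        prob_space.indep_vars M (\<lambda>_. count_space UNIV) (\<lambda>i \<omega>. card (X \<omega> \<inter> A i)) I)"

definition shell_in :: "real \<Rightarrow> 'a::euclidean_space set" where
  "shell_in e = {x. 1 - e < norm x \<and> norm x < 1}"

definition shell_out :: "real \<Rightarrow> 'a::euclidean_space set" where
  "shell_out e = {x. 1 < norm x \<and> norm x < 1 + e}"

definition shell :: "real \<Rightarrow> 'a::euclidean_space set" where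
  "shell e = shell_in e \<union> sphere 0 1 \<union> shell_out e"

definition tess_cell :: "'a::euclidean_space set \<Rightarrow> 'a set" where
  "tess_cell X = closure (connected_component_set (- (\<Union>x\<in>X. sphere x 1)) 0)"

definition inter_cell :: "'a::euclidean_space set \<Rightarrow> 'a set" where
  "inter_cell C = (\<Inter>c\<in>C. cball c 1)"

definition eps_lam :: "real \<Rightarrow> real" where
  "eps_lam l = (ln l)^2 / l"

text \<open>Probability of an event tends to 1 as l tends to infinity (inner probability, so
no measurability issue arises: measurable sub-events of probability close to 1 exist).\<close>
definition prob_to_one :: "(real \<Rightarrow> 'b measure) \<Rightarrow> (real \<Rightarrow> 'b \<Rightarrow> bool) \<Rightarrow> bool" where
  "prob_to_one M P \<longleftrightarrow> (\<forall>\<delta>>0. eventually (\<lambda>l. \<exists>E\<in>sets (M l).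
       E \<subseteq> {\<omega>\<in>space (M l). P l \<omega>} \<and> measure (M l) E \<ge> 1 - \<delta>) at_top)"

end

theory Submission
  imports Defs "HOL-Real_Asymp.Real_Asymp"
begin

text \<open>Say that a point set Z separates the sphere of radius r if every y with norm y = r
has a point x of Z inside the unit ball with norm (x - y) > 1. Then the unit sphere around x
cuts y off from the origin, so both the component of the origin and the intersection of the
unit balls around Z lie in the ball of radius r; and points of distance at least r from the
unit sphere have spheres missing that ball, so they do not affect either cell.
Separation of the sphere of radius r = eps_lam l is forced by finitely many "caps": for each
u of a fixed finite net of the unit sphere, the part of the shell of width r/8 inside the cone
of half-angle 60 degrees around -u. A cap has volume proportional to r, so a Poisson process of
intensity proportional to l misses it with probability exp (- c (ln l)^2), which tends to 0.\<close>

definition antipodal_cone :: "'a::euclidean_space \<Rightarrow> 'a set" where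
  "antipodal_cone u = {x. norm x < - 2 * (x \<bullet> u)}"

definition shell_cap :: "'a::euclidean_space \<Rightarrow> real \<Rightarrow> 'a set" where
  "shell_cap u r = antipodal_cone u \<inter> cball 0 (1 - r/16) - cball 0 (1 - r/8)"

lemma shell_cap_far:
  fixes x y u :: "'a::euclidean_space"
  assumes u: "norm u = 1" and x: "x \<in> shell_cap u r" and r: "0 < r" "r \<le> 1"
    and y: "norm y = r" and yu: "norm (y - r *\<^sub>R u) < r/4"
  shows "1 - r/8 < norm x \<and> norm x < 1 \<and> 1 < norm (x - y)"
proof -
  have cone: "norm x < - 2 * (x \<bullet> u)" and lower: "1 - r/8 < norm x" and upper: "norm x \<le> 1 - r/16"
    using x by (auto simp: shell_cap_def antipodal_cone_def)
  have "x \<bullet> y = r * (x \<bullet> u) + x \<bullet> (y - r *\<^sub>R u)"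
    by (simp add: inner_diff_right)
  also have "x \<bullet> (y - r *\<^sub>R u) \<le> norm x * (r/4)"
    using norm_cauchy_schwarz[of x "y - r *\<^sub>R u"] mult_left_mono[OF less_imp_le[OF yu], of "norm x"]
    by simp
  also have "r * (x \<bullet> u) < - (r * norm x) / 2"
    using mult_strict_left_mono[OF cone, of r] r by (simp add: algebra_simps)
  finally have xy: "x \<bullet> y < - (r * norm x) / 4" by simp
  have "0 < r^2" using r by simp
  then have "(norm x)^2 + r * norm x / 2 < (norm x)^2 - 2 * (x \<bullet> y) + r^2"
    using xy by linarith
  also have "\<dots> = (norm (x - y))^2"
    using y dot_norm_neg[of x y] by simp
  finally have dist_sq: "(norm x)^2 + r * norm x / 2 < (norm (x - y))^2" .
  have "(1 - r/8)^2 + r * (1 - r/8) / 2 \<le> (norm x)^2 + r * norm x / 2"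
    using lower r by (intro add_mono power_mono divide_right_mono mult_left_mono) auto
  moreover have "1 < (1 - r/8)^2 + r * (1 - r/8) / 2"
    using r by (simp add: power2_eq_square field_simps)
  ultimately have "1^2 < (norm (x - y))^2" using dist_sq by simp
  then have "1 < norm (x - y)" by (smt (verit) norm_ge_zero power_mono)
  with lower upper r show ?thesis by simp
qed

lemma antipodal_cone_open: "open (antipodal_cone u)"
  unfolding antipodal_cone_def by (intro open_Collect_less continuous_intros)

lemma antipodal_cone_Int_cball_borel: "antipodal_cone u \<inter> cball 0 s \<in> sets borel"
  using antipodal_cone_open by (intro sets.Int borel_open borel_closed) auto

lemma antipodal_cone_Int_cball_scale:
  assumes s: "s > 0"
  shows "antipodal_cone u \<inter> cball 0 s = (*\<^sub>R) s ` (antipodal_cone u \<inter> cball 0 1)"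
proof (rule set_eqI, rule iffI)
  fix x assume x: "x \<in> antipodal_cone u \<inter> cball 0 s"
  have "(1/s) *\<^sub>R x \<in> antipodal_cone u \<inter> cball 0 1"
    using x s by (auto simp: antipodal_cone_def field_simps)
  moreover have "x = s *\<^sub>R ((1/s) *\<^sub>R x)" using s by simp
  ultimately show "x \<in> (*\<^sub>R) s ` (antipodal_cone u \<inter> cball 0 1)" by blast
next
  fix x assume "x \<in> (*\<^sub>R) s ` (antipodal_cone u \<inter> cball 0 1)"
  then obtain z where z: "z \<in> antipodal_cone u" "norm z \<le> 1" and xz: "x = s *\<^sub>R z" by auto
  have "norm x \<le> s" using z s xz by (simp add: mult_left_le)
  moreover have "s * norm z < s * (- 2 * (z \<bullet> u))"
    using z s by (intro mult_strict_left_mono) (auto simp: antipodal_cone_def)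
  ultimately show "x \<in> antipodal_cone u \<inter> cball 0 s"
    using s xz by (simp add: antipodal_cone_def algebra_simps)
qed

lemma ball_subset_antipodal_cone:
  assumes u: "norm u = 1"
  shows "ball (- (1/2) *\<^sub>R u) (1/8) \<subseteq> antipodal_cone u \<inter> cball 0 1"
proof
  fix x assume "x \<in> ball (- (1/2) *\<^sub>R u) (1/8)"
  then obtain v where v: "norm v < 1/8" and xv: "x = - (1/2) *\<^sub>R u + v"
    by (metis add.commute diff_add_cancel dist_norm mem_ball norm_minus_commute)
  have "norm x \<le> 1/2 + norm v"
    using xv u norm_triangle_ineq[of "- (1/2) *\<^sub>R u" v] by simp
  moreover have "x \<bullet> u \<le> - 1/2 + norm v"
  proof -
    have "u \<bullet> u = 1" using u by (simp add: dot_square_norm)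
    then show ?thesis using xv u norm_cauchy_schwarz[of v u] by (simp add: inner_diff_left)
  qed
  ultimately show "x \<in> antipodal_cone u \<inter> cball 0 1" using v by (simp add: antipodal_cone_def)
qed

lemma power_Suc_diff_ge:
  fixes a b :: real
  assumes "0 \<le> a" "a \<le> b"
  shows "(b - a) * a ^ n \<le> b ^ Suc n - a ^ Suc n"
proof (induction n)
  case 0 then show ?case by simp
next
  case (Suc n)
  have "b ^ Suc (Suc n) - a ^ Suc (Suc n) = b * (b ^ Suc n - a ^ Suc n) + (b - a) * a ^ Suc n"
    by (simp add: algebra_simps)
  moreover have "0 \<le> b * (b ^ Suc n - a ^ Suc n)"
    using assms power_mono[OF assms(2), of "Suc n"] by simp
  ultimately show ?case by simp
qed

lemma shell_cap_borel: "shell_cap u r \<in> sets borel"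
  unfolding shell_cap_def using antipodal_cone_Int_cball_borel by (intro sets.Diff) auto

lemma shell_cap_subset_ball: "0 < r \<Longrightarrow> shell_cap u r \<subseteq> ball 0 1"
  by (auto simp: shell_cap_def)

definition shell_cap_const :: "'a::euclidean_space itself \<Rightarrow> real" where
  "shell_cap_const _ = measure lborel (ball (0::'a) (1/8)) / 2 ^ (DIM('a) - 1) / 16"

lemma shell_cap_const_pos: "0 < shell_cap_const TYPE('a::euclidean_space)"
  using content_ball_pos[of "1/8" "0::'a"] by (simp add: shell_cap_const_def)

lemma measure_antipodal_cone_Int_cball:
  fixes u :: "'a::euclidean_space"
  assumes "0 < s"
  shows "measure lborel (antipodal_cone u \<inter> cball 0 s) = s ^ DIM('a) * measure lborel (antipodal_cone u \<inter> cball 0 1)"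
proof -
  let ?K = "\<lambda>t. antipodal_cone u \<inter> cball (0::'a) t"
  have K: "?K t \<in> sets lborel" for t
    using antipodal_cone_Int_cball_borel by simp
  have "measure lborel (?K s) = measure lebesgue ((*\<^sub>R) s ` ?K 1)"
    using K[of s] by (simp add: antipodal_cone_Int_cball_scale[OF assms])
  also have "\<dots> = s ^ DIM('a) * measure lebesgue (?K 1)"
    using measure_lebesgue_affine[of s 0 "?K 1"] assms by simp
  also have "\<dots> = s ^ DIM('a) * measure lborel (?K 1)"
    using K[of 1] by simp
  finally show ?thesis .
qed

lemma emeasure_antipodal_cone_Int_cball_finite: "emeasure lborel (antipodal_cone u \<inter> cball 0 s) < \<infinity>"
  by (rule le_less_trans[OF emeasure_mono emeasure_lborel_cball_finite]) auto

lemma measure_ball_le_antipodal_cone: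
  fixes u :: "'a::euclidean_space"
  assumes "norm u = 1"
  shows "measure lborel (ball (0::'a) (1/8)) \<le> measure lborel (antipodal_cone u \<inter> cball 0 1)"
proof -
  have "measure lborel (ball (0::'a) (1/8)) = measure lborel (ball (- (1/2) *\<^sub>R u) (1/8))"
    using content_ball_conv_unit_ball[of "1/8" "0::'a"]
      content_ball_conv_unit_ball[of "1/8" "- (1/2) *\<^sub>R u"] by simp
  also have "\<dots> \<le> measure lborel (antipodal_cone u \<inter> cball 0 1)"
    using ball_subset_antipodal_cone[OF assms] antipodal_cone_Int_cball_borel
      emeasure_antipodal_cone_Int_cball_finite
    by (intro measure_mono_fmeasurable) (auto simp: fmeasurable_def)
  finally show ?thesis .
qed

text \<open>The cap is the difference of two copies of the fixed set antipodal_cone u \<inter> cball 0 1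
scaled by 1 - r/16 and 1 - r/8; the difference of their volumes is of order r.\<close>

lemma measure_shell_cap_ge:
  fixes u :: "'a::euclidean_space"
  assumes u: "norm u = 1" and r: "0 < r" "r \<le> 1"
  shows "shell_cap_const TYPE('a) * r \<le> measure lborel (shell_cap u r)"
proof -
  let ?d = "DIM('a)" and ?K = "\<lambda>s. antipodal_cone u \<inter> cball (0::'a) s"
  have "shell_cap u r = ?K (1 - r/16) - ?K (1 - r/8)"
    by (auto simp: shell_cap_def)
  then have "measure lborel (shell_cap u r) = measure lborel (?K (1 - r/16)) - measure lborel (?K (1 - r/8))"
    using antipodal_cone_Int_cball_borel emeasure_antipodal_cone_Int_cball_finite[of u "1 - r/16"] r
    by (simp only:) (intro measure_Diff; auto simp: fmeasurable_def)
  also have "\<dots> = ((1 - r/16) ^ ?d - (1 - r/8) ^ ?d) * measure lborel (?K 1)"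
    using measure_antipodal_cone_Int_cball[of "1 - r/16" u] measure_antipodal_cone_Int_cball[of "1 - r/8" u] r
    by (simp add: algebra_simps)
  finally have eq: "measure lborel (shell_cap u r) = ((1 - r/16) ^ ?d - (1 - r/8) ^ ?d) * measure lborel (?K 1)" .
  have "shell_cap_const TYPE('a) * r
      = (r/16) * (1/2) ^ (?d - 1) * measure lborel (ball (0::'a) (1/8))"
    by (simp add: shell_cap_const_def field_simps)
  also have "\<dots> \<le> (r/16) * (1 - r/8) ^ (?d - 1) * measure lborel (?K 1)"
    using measure_ball_le_antipodal_cone[OF u] r by (intro mult_mono power_mono) auto
  also have "\<dots> \<le> ((1 - r/16) ^ ?d - (1 - r/8) ^ ?d) * measure lborel (?K 1)"
    using power_Suc_diff_ge[of "1 - r/8" "1 - r/16" "?d - 1"] r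
    by (intro mult_right_mono) (simp_all add: algebra_simps)
  finally show ?thesis using eq by simp
qed

definition separates_sphere :: "real \<Rightarrow> 'a::euclidean_space set \<Rightarrow> bool" where
  "separates_sphere r Z \<longleftrightarrow> (\<forall>y. norm y = r \<longrightarrow> (\<exists>x\<in>Z. norm x < 1 \<and> 1 < norm (x - y)))"

lemma separates_sphere_mono: "separates_sphere r A \<Longrightarrow> A \<subseteq> B \<Longrightarrow> separates_sphere r B"
  unfolding separates_sphere_def by blast

lemma finite_sphere_net:
  "\<exists>U. finite U \<and> U \<subseteq> sphere (0::'a::euclidean_space) 1 \<and> (\<forall>v\<in>sphere 0 1. \<exists>u\<in>U. norm (v - u) < 1/4)"
proof -
  have "compact (sphere (0::'a) 1)" by simp
  moreover have "\<And>x. x \<in> sphere (0::'a) 1 \<Longrightarrow> open (ball x (1/4))" by simp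
  moreover have "sphere (0::'a) 1 \<subseteq> (\<Union>x\<in>sphere 0 1. ball x (1/4))" by force
  ultimately obtain U where "U \<subseteq> sphere 0 1" "finite U" "sphere (0::'a) 1 \<subseteq> (\<Union>x\<in>U. ball x (1/4))"
    by (rule compactE_image) blast
  then show ?thesis by (force simp: dist_norm norm_minus_commute)
qed

lemma separates_sphere_if_hits_caps:
  fixes Z :: "'a::euclidean_space set"
  assumes U: "U \<subseteq> sphere 0 1" "\<forall>v\<in>sphere 0 1. \<exists>u\<in>U. norm (v - u) < 1/4"
    and r: "0 < r" "r \<le> 1" and hits: "\<forall>u\<in>U. Z \<inter> shell_cap u r \<noteq> {}"
  shows "separates_sphere r (Z \<inter> shell_in (2 * r))"
  unfolding separates_sphere_def
proof (intro allI impI)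
  fix y :: 'a assume y: "norm y = r"
  have "(1/r) *\<^sub>R y \<in> sphere 0 1" using y r by simp
  then obtain u where u: "u \<in> U" "norm ((1/r) *\<^sub>R y - u) < 1/4" using U by blast
  have "y - r *\<^sub>R u = r *\<^sub>R ((1/r) *\<^sub>R y - u)" using r by (simp add: algebra_simps)
  then have "norm (y - r *\<^sub>R u) < r / 4" using u r by simp
  moreover obtain x where x: "x \<in> Z" "x \<in> shell_cap u r" using hits u by blast
  moreover have "norm u = 1" using U u by auto
  ultimately have "1 - r/8 < norm x \<and> norm x < 1 \<and> 1 < norm (x - y)"
    using shell_cap_far r y by blast
  with x r show "\<exists>x\<in>Z \<inter> shell_in (2 * r). norm x < 1 \<and> 1 < norm (x - y)"
    by (auto simp: shell_in_def)
qed

lemma connected_ivt_real: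
  fixes f :: "'a::topological_space \<Rightarrow> real"
  assumes "connected T" "continuous_on T f" "a \<in> T" "b \<in> T" "f a \<le> t" "t \<le> f b"
  shows "\<exists>z\<in>T. f z = t"
proof -
  have "connected (f ` T)" using assms by (intro connected_continuous_image)
  then have "t \<in> f ` T" using assms connectedD_interval[of "f ` T" "f a" "f b" t] by blast
  then show ?thesis by auto
qed

text \<open>The component is connected and contains 0, so if it reached norm r it would contain
some y with norm y = r; it would then also meet the unit sphere around the point x separating y,
since 0 lies inside that sphere and y outside.\<close>

lemma connected_component_spheres_subset_ball:
  fixes Z :: "'a::euclidean_space set"
  assumes r: "r > 0" and sep: "separates_sphere r Z"
  shows "connected_component_set (- (\<Union>x\<in>Z. sphere x 1)) 0 \<subseteq> ball 0 r"
proof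
  let ?S = "- (\<Union>x\<in>Z. sphere x 1)"
  let ?C = "connected_component_set ?S 0"
  fix z assume z: "z \<in> ?C"
  show "z \<in> ball 0 r"
  proof (rule ccontr)
    assume "z \<notin> ball 0 r"
    then have zr: "r \<le> norm z" by simp
    have 0: "0 \<in> ?C" using z connected_component_in[of ?S 0 z] by simp
    have norm_cont: "continuous_on ?C norm" by (intro continuous_intros)
    have "norm (0::'a) \<le> r" using r by simp
    then obtain y where y: "y \<in> ?C" "norm y = r"
      using connected_ivt_real[OF connected_connected_component norm_cont 0 z _ zr] by blast
    obtain x where x: "x \<in> Z" "norm x < 1" "1 < norm (x - y)"
      using sep y(2) unfolding separates_sphere_def by blast
    have dist_cont: "continuous_on ?C (\<lambda>w. norm (w - x))" by (intro continuous_intros)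
    have "norm (0 - x) \<le> 1" "1 \<le> norm (y - x)" using x by (auto simp: norm_minus_commute)
    then obtain w where w: "w \<in> ?C" "norm (w - x) = 1"
      using connected_ivt_real[OF connected_connected_component dist_cont 0 y(1)] by blast
    have "w \<in> ?S" using w(1) connected_component_in[of ?S 0 w] by simp
    moreover have "w \<in> sphere x 1" using w(2) by (simp add: dist_norm norm_minus_commute)
    ultimately show False using x(1) by blast
  qed
qed

lemma tess_cell_subset_cball:
  fixes Z :: "'a::euclidean_space set"
  assumes "r > 0" and "separates_sphere r Z"
  shows "tess_cell Z \<subseteq> cball 0 r"
  unfolding tess_cell_def
  using closure_mono[OF connected_component_spheres_subset_ball[OF assms]] assms(1) by simp

lemma tess_cell_subset_ball_if_shell_separates:
  fixes Z :: "'a::euclidean_space set"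
  assumes "0 < r" and "separates_sphere r (Z \<inter> shell_in (2 * r))"
  shows "tess_cell Z \<subseteq> ball 0 (2 * r)"
proof -
  have "tess_cell Z \<subseteq> cball 0 r"
    using assms separates_sphere_mono[OF assms(2) Int_lower1] by (intro tess_cell_subset_cball)
  also have "\<dots> \<subseteq> ball 0 (2 * r)" using assms(1) by (simp add: cball_subset_ball_iff)
  finally show ?thesis .
qed

lemma tess_cell_eq_if_far:
  fixes Z :: "'a::euclidean_space set"
  assumes r: "r > 0" and sep: "separates_sphere r Y" and YZ: "Y \<subseteq> Z"
    and far: "\<And>x. x \<in> Z - Y \<Longrightarrow> r \<le> \<bar>norm x - 1\<bar>"
  shows "tess_cell Y = tess_cell Z"
proof -
  let ?SY = "- (\<Union>x\<in>Y. sphere x 1)" and ?SZ = "- (\<Union>x\<in>Z. sphere x 1)"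
  have "connected_component_set ?SZ 0 \<subseteq> connected_component_set ?SY 0"
    using YZ by (intro connected_component_mono) blast
  moreover have "connected_component_set ?SY 0 \<subseteq> connected_component_set ?SZ 0"
  proof (cases "0 \<in> ?SY")
    case False
    then show ?thesis using connected_component_in by fastforce
  next
    case True
    have "connected_component_set ?SY 0 \<subseteq> ?SZ"
    proof
      fix w assume w: "w \<in> connected_component_set ?SY 0"
      have wY: "w \<in> ?SY" using w connected_component_in by fastforce
      have wr: "norm w < r" using w connected_component_spheres_subset_ball[OF r sep] by auto
      show "w \<in> ?SZ"
      proof
        assume "w \<in> (\<Union>x\<in>Z. sphere x 1)"
        then obtain x where x: "x \<in> Z" "norm (x - w) = 1" by (auto simp: dist_norm)
        have "x \<notin> Y" using wY x by (auto simp: dist_norm)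
        with far x have "r \<le> \<bar>norm x - 1\<bar>" by blast
        moreover have "norm (x - w) \<le> norm x + norm w" by (rule norm_triangle_ineq4)
        moreover have "norm x \<le> norm (x - w) + norm w" by (metis diff_add_cancel norm_triangle_ineq)
        ultimately show False using x(2) wr by linarith
      qed
    qed
    then show ?thesis using True by (intro connected_component_maximal) auto
  qed
  ultimately show ?thesis unfolding tess_cell_def by simp
qed

lemma tess_cell_Int_shell:
  fixes X :: "'a::euclidean_space set"
  assumes "r > 0" and "separates_sphere r (X \<inter> shell_in (2 * r))"
  shows "tess_cell (X \<inter> shell (2 * r)) = tess_cell X"
proof (rule tess_cell_eq_if_far[OF \<open>r > 0\<close>])
  show "separates_sphere r (X \<inter> shell (2 * r))"
    using assms(2) by (rule separates_sphere_mono) (auto simp: shell_def)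
  show "r \<le> \<bar>norm x - 1\<bar>" if "x \<in> X - X \<inter> shell (2 * r)" for x
    using that \<open>r > 0\<close> by (auto simp: shell_def shell_in_def shell_out_def)
qed auto

lemma inter_cell_subset_ball:
  fixes Z :: "'a::euclidean_space set"
  assumes r: "r > 0" and sep: "separates_sphere r Z" and Z: "Z \<subseteq> cball 0 1"
  shows "inter_cell Z \<subseteq> ball 0 r"
proof
  fix z assume z: "z \<in> inter_cell Z"
  show "z \<in> ball 0 r"
  proof (rule ccontr)
    assume "z \<notin> ball 0 r"
    then have zr: "r \<le> norm z" by simp
    have "0 \<in> inter_cell Z" using Z by (auto simp: inter_cell_def dist_norm)
    moreover have "convex (inter_cell Z)" unfolding inter_cell_def by (intro convex_INT) auto
    moreover have t: "0 \<le> r / norm z" "r / norm z \<le> 1" using zr r by (auto simp: divide_le_eq_1)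
    ultimately have "(r / norm z) *\<^sub>R z \<in> inter_cell Z"
      using convexD[of "inter_cell Z" 0 z "1 - r / norm z" "r / norm z"] z by simp
    moreover have "norm ((r / norm z) *\<^sub>R z) = r"
      using zr r by (cases "z = 0") auto
    ultimately obtain x where "1 < norm (x - (r / norm z) *\<^sub>R z)" "(r / norm z) *\<^sub>R z \<in> cball x 1"
      using sep unfolding separates_sphere_def inter_cell_def by blast
    then show False by (simp add: dist_norm)
  qed
qed

lemma inter_cell_subset_ball_if_shell_separates:
  fixes Z :: "'a::euclidean_space set"
  assumes "0 < r" and "separates_sphere r (Z \<inter> shell_in (2 * r))" and "Z \<subseteq> cball 0 1"
  shows "inter_cell Z \<subseteq> ball 0 (2 * r)"
proof -
  have "inter_cell Z \<subseteq> ball 0 r"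
    using assms separates_sphere_mono[OF assms(2) Int_lower1] by (intro inter_cell_subset_ball)
  also have "\<dots> \<subseteq> ball 0 (2 * r)" using assms(1) by (simp add: subset_ball)
  finally show ?thesis .
qed

lemma inter_cell_eq_if_far:
  fixes Z :: "'a::euclidean_space set"
  assumes r: "r > 0" and sep: "separates_sphere r Y" and YZ: "Y \<subseteq> Z" and Z: "Z \<subseteq> cball 0 1"
    and far: "\<And>x. x \<in> Z - Y \<Longrightarrow> norm x \<le> 1 - r"
  shows "inter_cell Y = inter_cell Z"
proof
  show "inter_cell Z \<subseteq> inter_cell Y" using YZ by (auto simp: inter_cell_def)
  show "inter_cell Y \<subseteq> inter_cell Z"
  proof
    fix w assume w: "w \<in> inter_cell Y"
    have "Y \<subseteq> cball 0 1" using YZ Z by blast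
    then have "norm w < r" using inter_cell_subset_ball[OF r sep] w by auto
    then have "w \<in> cball x 1" if "x \<in> Z - Y" for x
      using far[OF that] norm_triangle_ineq4[of x w] by (simp add: dist_norm)
    then show "w \<in> inter_cell Z" using w by (auto simp: inter_cell_def)
  qed
qed

lemma inter_cell_Int_shell_in:
  fixes C :: "'a::euclidean_space set"
  assumes "r > 0" and "separates_sphere r (C \<inter> shell_in (2 * r))"
    and "C \<subseteq> cball 0 1" and "C \<inter> sphere 0 1 = {}"
  shows "inter_cell (C \<inter> shell_in (2 * r)) = inter_cell C"
proof (rule inter_cell_eq_if_far[OF assms(1,2) _ assms(3)])
  show "norm x \<le> 1 - r" if "x \<in> C - C \<inter> shell_in (2 * r)" for x
    using that assms(1,3,4) by (force simp: shell_in_def)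
qed auto

lemma measure_lborel_sphere: "measure lborel (sphere (a::'a::euclidean_space) r) = 0"
proof -
  from negligible_sphere[of a r] have "sphere a r \<in> null_sets lborel"
    by (auto simp: null_sets_completion_iff negligible_iff_null_sets negligible_convex_frontier)
  then show ?thesis by (simp add: measure_eq_0_null_sets)
qed

lemma poisson_pp_no_points:
  fixes X :: "'b \<Rightarrow> 'a::euclidean_space set"
  assumes pp: "poisson_pp M X W c" and S: "S \<in> sets borel" "bounded S" "S \<subseteq> W"
  shows "{\<omega>\<in>space M. X \<omega> \<inter> S = {}} \<in> sets M"
    and "measure M {\<omega>\<in>space M. X \<omega> \<inter> S = {}} = exp (- (c * measure lborel S))"
proof -
  have "finite (X \<omega> \<inter> S)" if "\<omega> \<in> space M" for \<omega>
    using pp that S(2) by (simp add: poisson_pp_def)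
  then have eq: "{\<omega>\<in>space M. X \<omega> \<inter> S = {}} = (\<lambda>\<omega>. card (X \<omega> \<inter> S)) -` {0} \<inter> space M"
    by auto
  have "(\<lambda>\<omega>. card (X \<omega> \<inter> S)) \<in> measurable M (count_space UNIV)"
    and "measure M {\<omega>\<in>space M. card (X \<omega> \<inter> S) = 0} = exp (- (c * measure lborel S))"
    using pp S unfolding poisson_pp_def by auto
  then show "{\<omega>\<in>space M. X \<omega> \<inter> S = {}} \<in> sets M"
    and "measure M {\<omega>\<in>space M. X \<omega> \<inter> S = {}} = exp (- (c * measure lborel S))"
    unfolding eq by (auto intro: measurable_sets simp: vimage_def Int_def conj_commute)
qed

lemma poisson_pp_hits_all_avoids_null:
  fixes X :: "'b \<Rightarrow> 'a::euclidean_space set" and A :: "'u \<Rightarrow> 'a set"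
  assumes pp: "poisson_pp M X W c" and U: "finite U"
    and A: "\<And>u. u \<in> U \<Longrightarrow> A u \<in> sets borel \<and> bounded (A u) \<and> A u \<subseteq> W"
    and B: "B \<in> sets borel" "bounded B" "B \<subseteq> W" "measure lborel B = 0"
  shows "\<exists>E\<in>sets M. E \<subseteq> {\<omega>\<in>space M. (\<forall>u\<in>U. X \<omega> \<inter> A u \<noteq> {}) \<and> X \<omega> \<inter> B = {}} \<and>
     1 - (\<Sum>u\<in>U. exp (- (c * measure lborel (A u)))) \<le> measure M E"
proof -
  interpret prob_space M using pp by (simp add: poisson_pp_def)
  define F where "F u = {\<omega>\<in>space M. X \<omega> \<inter> A u = {}}" for u
  define G where "G = {\<omega>\<in>space M. X \<omega> \<inter> B = {}}"
  define E where "E = G - (\<Union>u\<in>U. F u)"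
  have F: "F u \<in> sets M" "measure M (F u) = exp (- (c * measure lborel (A u)))" if "u \<in> U" for u
    using poisson_pp_no_points[OF pp] A[OF that] unfolding F_def by auto
  have G: "G \<in> sets M" "measure M G = 1"
    using poisson_pp_no_points[OF pp B(1-3)] B(4) unfolding G_def by auto
  have UF: "(\<Union>u\<in>U. F u) \<in> sets M" using F U by blast
  have "1 \<le> measure M (E \<union> (\<Union>u\<in>U. F u))"
    using G UF by (subst G(2)[symmetric], intro finite_measure_mono) (auto simp: E_def)
  also have "\<dots> \<le> measure M E + measure M (\<Union>u\<in>U. F u)"
    using G UF by (intro measure_Un_le) (auto simp: E_def)
  also have "measure M (\<Union>u\<in>U. F u) \<le> (\<Sum>u\<in>U. measure M (F u))"
    using F U by (intro measure_UNION_le) auto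
  also have "\<dots> = (\<Sum>u\<in>U. exp (- (c * measure lborel (A u))))"
    using F by simp
  finally have "1 - (\<Sum>u\<in>U. exp (- (c * measure lborel (A u)))) \<le> measure M E" by simp
  moreover have "E \<subseteq> {\<omega>\<in>space M. (\<forall>u\<in>U. X \<omega> \<inter> A u \<noteq> {}) \<and> X \<omega> \<inter> B = {}}"
    by (auto simp: E_def F_def G_def)
  moreover have "E \<in> sets M" using G UF by (auto simp: E_def)
  ultimately show ?thesis by blast
qed

lemma poisson_pp_separates_shell:
  fixes X :: "'b \<Rightarrow> 'a::euclidean_space set" and U :: "'a set"
  assumes pp: "poisson_pp M X W c" and c: "c \<ge> 0" and W: "cball 0 1 \<subseteq> W"
    and U: "finite U" "U \<subseteq> sphere 0 1" "\<forall>v\<in>sphere 0 1. \<exists>u\<in>U. norm (v - u) < 1/4"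
    and r: "0 < r" "r \<le> 1"
  shows "\<exists>E\<in>sets M. E \<subseteq> {\<omega>\<in>space M. separates_sphere r (X \<omega> \<inter> shell_in (2 * r)) \<and> X \<omega> \<inter> sphere 0 1 = {}} \<and>
     1 - card U * exp (- (c * shell_cap_const TYPE('a) * r)) \<le> measure M E"
proof -
  have caps: "shell_cap u r \<in> sets borel \<and> bounded (shell_cap u r) \<and> shell_cap u r \<subseteq> W" for u
  proof -
    have "shell_cap u r \<subseteq> cball 0 1" using shell_cap_subset_ball[OF r(1), of u] by auto
    then show ?thesis using shell_cap_borel W bounded_subset[OF bounded_cball] by blast
  qed
  have "sphere (0::'a) 1 \<in> sets borel" "bounded (sphere (0::'a) 1)" "sphere (0::'a) 1 \<subseteq> W"
    using W by auto
  from poisson_pp_hits_all_avoids_null[where A = "\<lambda>u. shell_cap u r", OF pp U(1) caps this measure_lborel_sphere]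
  obtain E where E: "E \<in> sets M"
    "E \<subseteq> {\<omega>\<in>space M. (\<forall>u\<in>U. X \<omega> \<inter> shell_cap u r \<noteq> {}) \<and> X \<omega> \<inter> sphere 0 1 = {}}"
    "1 - (\<Sum>u\<in>U. exp (- (c * measure lborel (shell_cap u r)))) \<le> measure M E"
    by (elim bexE conjE) (rule that)
  have "(\<Sum>u\<in>U. exp (- (c * measure lborel (shell_cap u r)))) \<le> (\<Sum>u\<in>U. exp (- (c * shell_cap_const TYPE('a) * r)))"
  proof (rule sum_mono)
    fix u assume "u \<in> U"
    then have "c * (shell_cap_const TYPE('a) * r) \<le> c * measure lborel (shell_cap u r)"
      using measure_shell_cap_ge[of u r] U r c by (intro mult_left_mono) auto
    then show "exp (- (c * measure lborel (shell_cap u r))) \<le> exp (- (c * shell_cap_const TYPE('a) * r))"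
      by (simp add: mult.assoc)
  qed
  moreover have "E \<subseteq> {\<omega>\<in>space M. separates_sphere r (X \<omega> \<inter> shell_in (2 * r)) \<and> X \<omega> \<inter> sphere 0 1 = {}}"
    using E(2) separates_sphere_if_hits_caps[OF U(2,3) r] by blast
  ultimately show ?thesis using E(1,3) by (intro bexI[of _ E]) auto
qed

lemma prob_to_one_if_bound:
  assumes bound: "\<forall>\<^sub>F l in at_top. \<exists>E\<in>sets (M l). E \<subseteq> {\<omega>\<in>space (M l). P l \<omega>} \<and> 1 - f l \<le> measure (M l) E"
    and f: "(f \<longlongrightarrow> 0) at_top"
  shows "prob_to_one M P"
  unfolding prob_to_one_def
proof (intro allI impI)
  fix \<delta> :: real assume "\<delta> > 0"
  with f have "\<forall>\<^sub>F l in at_top. f l < \<delta>" by (rule order_tendstoD(2))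
  then show "\<forall>\<^sub>F l in at_top. \<exists>E\<in>sets (M l). E \<subseteq> {\<omega>\<in>space (M l). P l \<omega>} \<and> 1 - \<delta> \<le> measure (M l) E"
    using bound
  proof eventually_elim
    case (elim l)
    then obtain E where "E \<in> sets (M l)" "E \<subseteq> {\<omega>\<in>space (M l). P l \<omega>}" "1 - f l \<le> measure (M l) E"
      by (elim bexE conjE) (rule that)
    with elim(1) show ?case by (intro bexI[of _ E]) auto
  qed
qed

lemma prob_to_one_mono:
  assumes "prob_to_one M Q" and "\<forall>\<^sub>F l in at_top. \<forall>\<omega>\<in>space (M l). Q l \<omega> \<longrightarrow> P l \<omega>"
  shows "prob_to_one M P"
  unfolding prob_to_one_def
proof (intro allI impI)
  fix \<delta> :: real assume "\<delta> > 0"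
  with assms(1) have "\<forall>\<^sub>F l in at_top. \<exists>E\<in>sets (M l). E \<subseteq> {\<omega>\<in>space (M l). Q l \<omega>} \<and> 1 - \<delta> \<le> measure (M l) E"
    by (simp add: prob_to_one_def)
  then show "\<forall>\<^sub>F l in at_top. \<exists>E\<in>sets (M l). E \<subseteq> {\<omega>\<in>space (M l). P l \<omega>} \<and> 1 - \<delta> \<le> measure (M l) E"
    using assms(2)
  proof eventually_elim
    case (elim l)
    then obtain E where "E \<in> sets (M l)" "E \<subseteq> {\<omega>\<in>space (M l). Q l \<omega>}" "1 - \<delta> \<le> measure (M l) E"
      by (elim bexE conjE) (rule that)
    with elim(2) show ?case by (intro bexI[of _ E]) auto
  qed
qed

lemma eventually_eps_lam_bounds: "\<forall>\<^sub>F l in at_top. 0 < eps_lam l \<and> eps_lam l \<le> 1"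
proof -
  have "\<forall>\<^sub>F l in at_top. 0 < eps_lam l" unfolding eps_lam_def by real_asymp
  moreover have "\<forall>\<^sub>F l in at_top. eps_lam l \<le> 1" unfolding eps_lam_def by real_asymp
  ultimately show ?thesis by eventually_elim simp
qed

lemma prob_to_one_separates_shell:
  fixes M :: "real \<Rightarrow> 'b measure" and X :: "real \<Rightarrow> 'b \<Rightarrow> 'a::euclidean_space set"
  assumes pp: "\<And>l. l > 0 \<Longrightarrow> poisson_pp (M l) (X l) W (a * l)" and a: "a > 0" and W: "cball 0 1 \<subseteq> W"
  shows "prob_to_one M (\<lambda>l \<omega>. separates_sphere (eps_lam l) (X l \<omega> \<inter> shell_in (2 * eps_lam l)) \<and>
    X l \<omega> \<inter> sphere 0 1 = {})"
proof -
  obtain U :: "'a set" where U: "finite U" "U \<subseteq> sphere 0 1" "\<forall>v\<in>sphere 0 1. \<exists>u\<in>U. norm (v - u) < 1/4"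
    using finite_sphere_net by blast
  define \<kappa> where "\<kappa> = a * shell_cap_const TYPE('a)"
  have "\<kappa> > 0" using a shell_cap_const_pos[where 'a = 'a] by (simp add: \<kappa>_def)
  then have lim: "((\<lambda>l. card U * exp (- (\<kappa> * (ln l)^2))) \<longlongrightarrow> 0) at_top"
    by real_asymp
  have "\<forall>\<^sub>F l in at_top. 0 < l \<and> 0 < eps_lam l \<and> eps_lam l \<le> 1"
    using eventually_gt_at_top[of 0] eventually_eps_lam_bounds by eventually_elim simp
  then have "\<forall>\<^sub>F l in at_top. \<exists>E\<in>sets (M l). E \<subseteq> {\<omega>\<in>space (M l).
      separates_sphere (eps_lam l) (X l \<omega> \<inter> shell_in (2 * eps_lam l)) \<and> X l \<omega> \<inter> sphere 0 1 = {}} \<and>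
      1 - card U * exp (- (\<kappa> * (ln l)^2)) \<le> measure (M l) E"
  proof eventually_elim
    case (elim l)
    have "a * l * shell_cap_const TYPE('a) * eps_lam l = \<kappa> * (ln l)^2"
      using elim by (simp add: \<kappa>_def eps_lam_def)
    with poisson_pp_separates_shell[OF pp _ W U, of l "eps_lam l"] elim a show ?case by simp
  qed
  then show ?thesis using lim by (rule prob_to_one_if_bound)
qed

theorem mainTheorem11:
  fixes M :: "real \<Rightarrow> 'b measure" and X :: "real \<Rightarrow> 'b \<Rightarrow> 'a::euclidean_space set"
    and N :: "real \<Rightarrow> 'c measure" and C :: "real \<Rightarrow> 'c \<Rightarrow> 'a set"
  assumes "DIM('a) \<ge> 2"
    and "\<And>l. l > 0 \<Longrightarrow> poisson_pp (M l) (X l) UNIV (l / 2)"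
    and "\<And>l. l > 0 \<Longrightarrow> poisson_pp (N l) (C l) (cball 0 1) l"
  shows "prob_to_one M (\<lambda>l \<omega>. tess_cell (X l \<omega> \<inter> shell (2 * eps_lam l)) = tess_cell (X l \<omega>)) \<and>
      prob_to_one N (\<lambda>l \<omega>. inter_cell (C l \<omega> \<inter> shell_in (2 * eps_lam l)) = inter_cell (C l \<omega>)) \<and>
      prob_to_one M (\<lambda>l \<omega>. tess_cell (X l \<omega>) \<subseteq> ball 0 (2 * eps_lam l)) \<and>
      prob_to_one N (\<lambda>l \<omega>. inter_cell (C l \<omega>) \<subseteq> ball 0 (2 * eps_lam l))"
proof -
  have sep_M: "prob_to_one M (\<lambda>l \<omega>. separates_sphere (eps_lam l) (X l \<omega> \<inter> shell_in (2 * eps_lam l)) \<and>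
      X l \<omega> \<inter> sphere 0 1 = {})"
    by (rule prob_to_one_separates_shell[where a = "1/2"]) (use assms(2) in auto)
  have sep_N: "prob_to_one N (\<lambda>l \<omega>. separates_sphere (eps_lam l) (C l \<omega> \<inter> shell_in (2 * eps_lam l)) \<and>
      C l \<omega> \<inter> sphere 0 1 = {})"
    by (rule prob_to_one_separates_shell[where a = 1]) (use assms(3) in auto)
  have in_ball: "\<forall>\<^sub>F l in at_top. \<forall>\<omega>\<in>space (N l). C l \<omega> \<subseteq> cball 0 1"
    using eventually_gt_at_top[of 0] by eventually_elim (use assms(3) in \<open>auto simp: poisson_pp_def\<close>)
  show ?thesis
  proof (intro conjI)
    show "prob_to_one M (\<lambda>l \<omega>. tess_cell (X l \<omega> \<inter> shell (2 * eps_lam l)) = tess_cell (X l \<omega>))"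
      using sep_M by (rule prob_to_one_mono)
        (use eventually_eps_lam_bounds in \<open>eventually_elim, simp add: tess_cell_Int_shell\<close>)
    show "prob_to_one N (\<lambda>l \<omega>. inter_cell (C l \<omega> \<inter> shell_in (2 * eps_lam l)) = inter_cell (C l \<omega>))"
      using sep_N by (rule prob_to_one_mono)
        (use eventually_eps_lam_bounds in_ball in \<open>eventually_elim, simp add: inter_cell_Int_shell_in\<close>)
    show "prob_to_one M (\<lambda>l \<omega>. tess_cell (X l \<omega>) \<subseteq> ball 0 (2 * eps_lam l))"
      using sep_M by (rule prob_to_one_mono)
        (use eventually_eps_lam_bounds in \<open>eventually_elim, simp add: tess_cell_subset_ball_if_shell_separates\<close>)
    show "prob_to_one N (\<lambda>l \<omega>. inter_cell (C l \<omega>) \<subseteq> ball 0 (2 * eps_lam l))"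
      using sep_N by (rule prob_to_one_mono)
        (use eventually_eps_lam_bounds in_ball in \<open>eventually_elim, simp add: inter_cell_subset_ball_if_shell_separates\<close>)
  qed
qed

end
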